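(* Let $N\ge3$ be an integer and consider the equation $$-w''+(N-2)w'+(N-1)w=\frac{1}{3}\binom{N-1}{2}w^3 .$$ Then: (D) the only $w\in C^2([0,\infty))$ solving it on $[0,\infty)$ with $w(0)=0$ and $\lim_{t\to\infty}w(t)=0$ is $w\equiv0$; (Nav) the only $w\in C^2([0,\infty))$ solving it on $[0,\infty)$ with $w'(0)-(N-1)w(0)=0$ and $\lim_{t\to\infty}w(t)=0$ is $w\equiv0$; (E) the only $w\in C^2(\mathbb{R})$ solving it on $\mathbb{R}$ with $\lim_{t\to\pm\infty}w(t)=0$ is $w\equiv0$.
   Context: These are the radial Dirichlet, Navier and entire problems for $\Delta^2u=-S_3[u]$ ($S_3$ the third elementary symmetric polynomial of the Hessian eigenvalues), i.e. $k=3$, $\lambda=0$, obtained via $v=u'$, $w(t)=-v(e^{-t})$. *)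

theory Defs
  imports "HOL-Analysis.Analysis"
begin

definition C2_on :: "real set \<Rightarrow> (real \<Rightarrow> real) \<Rightarrow> (real \<Rightarrow> real) \<Rightarrow> (real \<Rightarrow> real) \<Rightarrow> bool" where
  "C2_on S w w1 w2 \<longleftrightarrow>
     (\<forall>t\<in>S. (w has_real_derivative w1 t) (at t within S) \<and>
             (w1 has_real_derivative w2 t) (at t within S)) \<and>
     continuous_on S w2"

definition ode_at :: "nat \<Rightarrow> (real \<Rightarrow> real) \<Rightarrow> (real \<Rightarrow> real) \<Rightarrow> (real \<Rightarrow> real) \<Rightarrow> real \<Rightarrow> bool" where
  "ode_at N w w1 w2 t \<longleftrightarrow>
     - w2 t + (real N - 2) * w1 t + (real N - 1) * w t
       = (1/3) * real ((N - 1) choose 2) * (w t) ^ 3"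

end

theory Submission
  imports Defs
begin

text \<open>Writing the equation as \<open>w'' = \<alpha> w' + \<beta> w - \<gamma> w\<^sup>3\<close> with \<open>\<alpha> = N - 2 > 0\<close>,
  \<open>\<beta> = N - 1 \<ge> 0\<close> and \<open>\<gamma> > 0\<close>, the energy \<open>E = w'\<^sup>2/2 - \<beta> w\<^sup>2/2 + \<gamma> w\<^sup>4/4\<close> satisfies
  \<open>E' = \<alpha> w'\<^sup>2 \<ge> 0\<close>. If \<open>w \<rightarrow> 0\<close> at \<open>+\<infinity>\<close>, then \<open>E \<le> 0\<close> everywhere: a positive value
  of \<open>E\<close> would persist and keep \<open>|w'|\<close> bounded away from zero while \<open>w\<close> is small,
  which is impossible. Both boundary conditions, and decay at \<open>-\<infinity>\<close> on the whole line,
  force \<open>E \<ge> 0\<close> at the left end. Hence \<open>E\<close> vanishes identically, so \<open>w' = 0\<close>, and \<open>w\<close>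
  is a constant tending to \<open>0\<close>.\<close>

lemma has_real_derivative_at_of_within_atLeast:
  assumes "(f has_real_derivative D) (at t within {a..})" and "a < t"
  shows "(f has_real_derivative D) (at t)"
proof -
  have "(f has_real_derivative D) (at t within {a<..})"
    using assms(1) by (rule has_field_derivative_subset) auto
  moreover have "at t within {a<..} = at t"
    using assms(2) by (intro at_within_open) auto
  ultimately show ?thesis by simp
qed

lemma mvt_atLeast:
  fixes f f' :: "real \<Rightarrow> real"
  assumes "\<And>t. t \<ge> a \<Longrightarrow> (f has_real_derivative f' t) (at t within {a..})"
    and "a \<le> x" and "x < y"
  shows "\<exists>z\<in>{x<..<y}. f y - f x = (y - x) * f' z"
proof -
  have "(f has_derivative (*) (f' z)) (at z within {x..y})" if "x \<le> z" for z
  proof (rule has_field_derivative_imp_has_derivative)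
    have "a \<le> z" and "{x..y} \<subseteq> {a..}"
      using \<open>a \<le> x\<close> that by auto
    then show "(f has_real_derivative f' z) (at z within {x..y})"
      using assms(1) has_field_derivative_subset by blast
  qed
  then obtain z where "z \<in> {x<..<y}" "f y - f x = f' z * (y - x)"
    using mvt_simple[OF \<open>x < y\<close>, where f = f and f' = "\<lambda>z. (*) (f' z)"] by blast
  then show ?thesis by (metis mult.commute)
qed

text \<open>A function with \<open>w'\<^sup>2 \<ge> \<delta> > 0\<close> on a half-line moves by at least \<open>2\<close> on an
  interval of length \<open>2/\<surd>\<delta>\<close>, so it cannot stay in \<open>(-1, 1)\<close>.\<close>

lemma not_tendsto_zero_if_derivative_bounded_away:
  assumes deriv: "\<And>t. t \<ge> a \<Longrightarrow> (w has_real_derivative w1 t) (at t within {a..})"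
    and "\<delta> > 0" and bound: "\<And>t. t \<ge> a \<Longrightarrow> \<delta> \<le> w1 t ^ 2"
  shows "\<not> (w \<longlongrightarrow> 0) at_top"
proof
  assume "(w \<longlongrightarrow> 0) at_top"
  then have "eventually (\<lambda>s. norm (w s) < 1) at_top"
    by (intro order_tendstoD(2)[OF tendsto_norm_zero]) auto
  then obtain T where small: "\<And>s. s \<ge> T \<Longrightarrow> \<bar>w s\<bar> < 1"
    by (auto simp: eventually_at_top_linorder)
  define T' where "T' = max T a"
  define k where "k = 2 / sqrt \<delta>"
  have "k > 0" and k2: "k ^ 2 * \<delta> = 4"
    using \<open>\<delta> > 0\<close> by (simp_all add: k_def power_divide)
  obtain z where "z > T'" and z: "w (T' + k) - w T' = k * w1 z"
    using mvt_atLeast[OF deriv, of T' "T' + k"] \<open>k > 0\<close> by (auto simp: T'_def)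
  have "\<delta> \<le> w1 z ^ 2"
    using bound \<open>z > T'\<close> by (simp add: T'_def)
  then have "4 \<le> k ^ 2 * w1 z ^ 2"
    using mult_left_mono[of \<delta> "w1 z ^ 2" "k ^ 2"] k2 by simp
  also have "\<dots> = (w (T' + k) - w T') ^ 2"
    by (simp add: z power_mult_distrib)
  also have "\<dots> < 2 ^ 2"
  proof -
    have "\<bar>w T'\<bar> < 1" and "\<bar>w (T' + k)\<bar> < 1"
      using small \<open>k > 0\<close> by (simp_all add: T'_def)
    then have "\<bar>w (T' + k) - w T'\<bar> < 2"
      by linarith
    then have "\<bar>w (T' + k) - w T'\<bar> ^ 2 < 2 ^ 2"
      by (intro power_strict_mono) auto
    then show ?thesis by simp
  qed
  finally show False by simp
qed

lemma C2_on_subset: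
  assumes "C2_on T w w1 w2" and "S \<subseteq> T"
  shows "C2_on S w w1 w2"
  using assms unfolding C2_on_def
  by (auto intro: has_field_derivative_subset continuous_on_subset)

definition energy :: "real \<Rightarrow> real \<Rightarrow> (real \<Rightarrow> real) \<Rightarrow> (real \<Rightarrow> real) \<Rightarrow> real \<Rightarrow> real" where
  "energy \<beta> \<gamma> w w1 t = w1 t ^ 2 / 2 - \<beta> * w t ^ 2 / 2 + \<gamma> * w t ^ 4 / 4"

context
  fixes \<alpha> \<beta> \<gamma> a :: real and w w1 w2 :: "real \<Rightarrow> real"
  assumes C2: "C2_on {a..} w w1 w2"
    and ode: "\<And>t. t \<ge> a \<Longrightarrow> w2 t = \<alpha> * w1 t + \<beta> * w t - \<gamma> * w t ^ 3"
begin

lemma has_derivative_w: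
  "t \<ge> a \<Longrightarrow> (w has_real_derivative w1 t) (at t within {a..})"
  using C2 unfolding C2_on_def by auto

lemma energy_has_derivative:
  assumes "t \<ge> a"
  shows "(energy \<beta> \<gamma> w w1 has_real_derivative \<alpha> * w1 t ^ 2) (at t within {a..})"
proof -
  have w1': "(w1 has_real_derivative w2 t) (at t within {a..})"
    using C2 assms unfolding C2_on_def by auto
  show ?thesis
    unfolding energy_def[abs_def]
    by (rule derivative_eq_intros has_derivative_w[OF assms] w1' refl | simp)+
       (simp add: ode[OF assms] algebra_simps power2_eq_square power3_eq_cube)
qed

lemma energy_mono:
  assumes "\<alpha> \<ge> 0" and "a \<le> x" and "x \<le> y"
  shows "energy \<beta> \<gamma> w w1 x \<le> energy \<beta> \<gamma> w w1 y"
proof (cases "x = y")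
  case False
  with \<open>x \<le> y\<close> have "x < y" by simp
  then obtain z where "energy \<beta> \<gamma> w w1 y - energy \<beta> \<gamma> w w1 x = (y - x) * (\<alpha> * w1 z ^ 2)"
    using mvt_atLeast[OF energy_has_derivative \<open>a \<le> x\<close>] by blast
  moreover have "(y - x) * (\<alpha> * w1 z ^ 2) \<ge> 0"
    using assms by simp
  ultimately show ?thesis by linarith
qed simp

text \<open>If \<open>E(t) = \<delta> > 0\<close>, then eventually \<open>\<gamma> w\<^sup>4/4 < \<delta>/2\<close>, and monotonicity of \<open>E\<close>
  together with \<open>\<beta> \<ge> 0\<close> gives \<open>w'\<^sup>2 \<ge> \<delta>\<close> from then on.\<close>

lemma energy_nonpos_if_tendsto_zero:
  assumes "\<alpha> \<ge> 0" and "\<beta> \<ge> 0" and lim: "(w \<longlongrightarrow> 0) at_top" and "t \<ge> a"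
  shows "energy \<beta> \<gamma> w w1 t \<le> 0"
proof (rule ccontr)
  define \<delta> where "\<delta> = energy \<beta> \<gamma> w w1 t"
  assume "\<not> energy \<beta> \<gamma> w w1 t \<le> 0"
  then have "\<delta> > 0" by (simp add: \<delta>_def)
  have "((\<lambda>s. \<gamma> * w s ^ 4 / 4) \<longlongrightarrow> \<gamma> * 0 ^ 4 / 4) at_top"
    by (intro tendsto_intros lim) simp
  then have "eventually (\<lambda>s. \<gamma> * w s ^ 4 / 4 < \<delta> / 2) at_top"
    using \<open>\<delta> > 0\<close> by (intro order_tendstoD) auto
  then obtain T where T: "\<And>s. s \<ge> T \<Longrightarrow> \<gamma> * w s ^ 4 / 4 < \<delta> / 2"
    by (auto simp: eventually_at_top_linorder)
  define T' where "T' = max T t"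
  have "\<delta> \<le> w1 s ^ 2" if "s \<ge> T'" for s
  proof -
    have "t \<le> s" and "T \<le> s"
      using that by (simp_all add: T'_def)
    then have "\<delta> \<le> w1 s ^ 2 / 2 - \<beta> * w s ^ 2 / 2 + \<gamma> * w s ^ 4 / 4"
      using energy_mono[OF \<open>\<alpha> \<ge> 0\<close> \<open>t \<ge> a\<close>] by (simp add: \<delta>_def energy_def)
    moreover have "\<beta> * w s ^ 2 \<ge> 0"
      using \<open>\<beta> \<ge> 0\<close> by simp
    ultimately show ?thesis
      using T[OF \<open>T \<le> s\<close>] by linarith
  qed
  moreover have "(w has_real_derivative w1 s) (at s within {T'..})" if "s \<ge> T'" for s
  proof -
    have "a \<le> s" and "{T'..} \<subseteq> {a..}"
      using that \<open>t \<ge> a\<close> by (auto simp: T'_def)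
    then show ?thesis
      using has_derivative_w has_field_derivative_subset by blast
  qed
  ultimately show False
    using not_tendsto_zero_if_derivative_bounded_away \<open>\<delta> > 0\<close> lim by blast
qed

lemma zero_if_energy_nonneg_at_start:
  assumes "\<alpha> > 0" and "\<beta> \<ge> 0" and lim: "(w \<longlongrightarrow> 0) at_top"
    and start: "energy \<beta> \<gamma> w w1 a \<ge> 0" and "t \<ge> a"
  shows "w t = 0"
proof -
  have energy_zero: "energy \<beta> \<gamma> w w1 s = 0" if "s \<ge> a" for s
    using energy_nonpos_if_tendsto_zero[OF _ \<open>\<beta> \<ge> 0\<close> lim that]
      energy_mono[of a s] \<open>\<alpha> > 0\<close> that start by fastforce
  have w1_zero: "w1 s = 0" if "s > a" for s
  proof -
    have "(energy \<beta> \<gamma> w w1 has_real_derivative \<alpha> * w1 s ^ 2) (at s)"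
      using has_real_derivative_at_of_within_atLeast[OF energy_has_derivative] that by simp
    then have "\<alpha> * w1 s ^ 2 = 0"
      by (rule DERIV_local_const[of _ _ _ "s - a"]) (use that energy_zero in auto)
    then show ?thesis using \<open>\<alpha> > 0\<close> by simp
  qed
  have "eventually (\<lambda>s. w s = w t) at_top"
  proof (rule eventually_at_top_linorderI[of "t + 1"])
    fix s assume "s \<ge> t + 1"
    then show "w s = w t"
      using mvt_atLeast[OF has_derivative_w \<open>t \<ge> a\<close>, of s] w1_zero \<open>t \<ge> a\<close> by force
  qed
  then have "((\<lambda>s::real. w t) \<longlongrightarrow> 0) at_top"
    using lim tendsto_cong by force
  then show ?thesis by (simp add: tendsto_const_iff)
qed

end

lemma energy_nonneg_if_tendsto_zero_at_bot:
  assumes C2: "C2_on UNIV w w1 w2"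
    and ode: "\<And>t. w2 t = \<alpha> * w1 t + \<beta> * w t - \<gamma> * w t ^ 3"
    and "\<alpha> \<ge> 0" and "\<gamma> \<ge> 0" and lim: "(w \<longlongrightarrow> 0) at_bot"
  shows "energy \<beta> \<gamma> w w1 s \<ge> 0"
proof (rule tendsto_upperbound)
  have "((\<lambda>r. - (\<beta> * w r ^ 2 / 2)) \<longlongrightarrow> - (\<beta> * 0 ^ 2 / 2)) at_bot"
    by (intro tendsto_intros lim) simp
  then show "((\<lambda>r. - (\<beta> * w r ^ 2 / 2)) \<longlongrightarrow> 0) at_bot"
    by simp
  have "- (\<beta> * w r ^ 2 / 2) \<le> energy \<beta> \<gamma> w w1 s" if "r \<le> s" for r
  proof -
    have "C2_on {r..} w w1 w2"
      using C2 by (rule C2_on_subset) simp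
    then have "energy \<beta> \<gamma> w w1 r \<le> energy \<beta> \<gamma> w w1 s"
      using energy_mono ode \<open>\<alpha> \<ge> 0\<close> that by blast
    moreover have "- (\<beta> * w r ^ 2 / 2) \<le> energy \<beta> \<gamma> w w1 r"
      using \<open>\<gamma> \<ge> 0\<close> unfolding energy_def by simp
    ultimately show ?thesis by linarith
  qed
  then show "eventually (\<lambda>r. - (\<beta> * w r ^ 2 / 2) \<le> energy \<beta> \<gamma> w w1 s) at_bot"
    by (auto simp: eventually_at_bot_linorder)
qed simp_all

lemma ode_at_iff:
  "ode_at N w w1 w2 t \<longleftrightarrow>
     w2 t = (real N - 2) * w1 t + (real N - 1) * w t - real ((N - 1) choose 2) / 3 * w t ^ 3"
  unfolding ode_at_def by (auto simp: algebra_simps)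

theorem theorem5p1:
  fixes N :: nat
  assumes "N \<ge> 3"
  shows
   "(\<forall>w w1 w2. C2_on {0..} w w1 w2 \<and> (\<forall>t\<ge>0. ode_at N w w1 w2 t) \<and>
        w 0 = 0 \<and> (w \<longlongrightarrow> 0) at_top \<longrightarrow> (\<forall>t\<ge>0. w t = 0))
  \<and> (\<forall>w w1 w2. C2_on {0..} w w1 w2 \<and> (\<forall>t\<ge>0. ode_at N w w1 w2 t) \<and>
        w1 0 - (real N - 1) * w 0 = 0 \<and> (w \<longlongrightarrow> 0) at_top \<longrightarrow> (\<forall>t\<ge>0. w t = 0))
  \<and> (\<forall>w w1 w2. C2_on UNIV w w1 w2 \<and> (\<forall>t. ode_at N w w1 w2 t) \<and>
        (w \<longlongrightarrow> 0) at_top \<and> (w \<longlongrightarrow> 0) at_bot \<longrightarrow> (\<forall>t. w t = 0))"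
proof -
  define \<alpha> \<beta> \<gamma> where "\<alpha> = real N - 2" and "\<beta> = real N - 1"
    and "\<gamma> = real ((N - 1) choose 2) / 3"
  have signs: "\<alpha> > 0" "\<beta> \<ge> 1" "\<gamma> \<ge> 0"
    using assms by (auto simp: \<alpha>_def \<beta>_def \<gamma>_def)
  have zero: "w t = 0"
    if "C2_on {a..} w w1 w2" "\<forall>s\<ge>a. w2 s = \<alpha> * w1 s + \<beta> * w s - \<gamma> * w s ^ 3"
      "(w \<longlongrightarrow> 0) at_top" "energy \<beta> \<gamma> w w1 a \<ge> 0" "t \<ge> a"
    for a t :: real and w w1 w2 :: "real \<Rightarrow> real"
    by (rule zero_if_energy_nonneg_at_start[OF that(1)]) (use that signs in auto)
  have navier_energy: "energy \<beta> \<gamma> w w1 0 = \<beta> * (\<beta> - 1) * w 0 ^ 2 / 2 + \<gamma> * w 0 ^ 4 / 4"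
    if "w1 0 = \<beta> * w 0" for w w1 :: "real \<Rightarrow> real"
    unfolding energy_def that by (simp add: power2_eq_square field_simps)
  show ?thesis
    unfolding ode_at_iff \<alpha>_def[symmetric] \<beta>_def[symmetric] \<gamma>_def[symmetric]
  proof (intro conjI allI impI)
    fix w w1 w2 :: "real \<Rightarrow> real" and t :: real
    show "w t = 0" if "C2_on {0..} w w1 w2 \<and> (\<forall>t\<ge>0. w2 t = \<alpha> * w1 t + \<beta> * w t - \<gamma> * w t ^ 3)
      \<and> w 0 = 0 \<and> (w \<longlongrightarrow> 0) at_top" and "t \<ge> 0"
      using zero[of 0 w w1 w2 t] that by (simp add: energy_def)
    show "w t = 0" if "C2_on {0..} w w1 w2 \<and> (\<forall>t\<ge>0. w2 t = \<alpha> * w1 t + \<beta> * w t - \<gamma> * w t ^ 3)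
      \<and> w1 0 - \<beta> * w 0 = 0 \<and> (w \<longlongrightarrow> 0) at_top" and "t \<ge> 0"
      using zero[of 0 w w1 w2 t] that signs navier_energy[of w1 w] by simp
    show "w t = 0" if "C2_on UNIV w w1 w2 \<and> (\<forall>t. w2 t = \<alpha> * w1 t + \<beta> * w t - \<gamma> * w t ^ 3)
      \<and> (w \<longlongrightarrow> 0) at_top \<and> (w \<longlongrightarrow> 0) at_bot"
      using zero[of t w w1 w2 t] energy_nonneg_if_tendsto_zero_at_bot[of w w1 w2 \<alpha> \<beta> \<gamma>]
        C2_on_subset[of UNIV w w1 w2 "{t..}"] that signs by simp
  qed
qed

end
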